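(* Assume Non-Degeneracy Assumption I, and let $U,P$ be the optimal solutions constructed from a base sequence and a nonnegative solution of the base-sequence system as in the Structure Theorem part (i). Let $\check U=\sum_n\tau_nu^n$, $\check P=\sum_n\tau_np^n$, and define $\underline{x}\in\mathbb{R}^K$, $\underline{q}\in\mathbb{R}^J$ by $$\underline{x}_k=-\min\Big\{0,\ \min_{1\le n\le N}\sum_{m=1}^n\dot x^m_k\tau_m\Big\},\qquad \underline{q}_j=-\min\Big\{0,\ \min_{1\le n\le N}\sum_{m=n}^N\dot q^m_j\tau_m\Big\}.$$ Then $(\mathbf{u}^0,\mathbf{u}^N)$ is an optimal solution of $$\max\ (\gamma+cT)^\top\mathbf{u}^0+\gamma^\top\mathbf{u}^N\ \text{ s.t. } A\mathbf{u}^0\le\beta-\underline{x},\ A\mathbf{u}^0+A\mathbf{u}^N\le\beta+bT-A\check U,\ \mathbf{u}^0,\mathbf{u}^N\ge0,$$ and $(\mathbf{p}^N,\mathbf{p}^0)$ is an optimal solution of $$\min\ (\beta+bT)^\top\mathbf{p}^N+\beta^\top\mathbf{p}^0\ \text{ s.t. } A^\top\mathbf{p}^N\ge\gamma+\underline{q},\ A^\top\mathbf{p}^N+A^\top\mathbf{p}^0\ge\gamma+cT-A^\top\check P,\ \mathbf{p}^N,\mathbf{p}^0\ge0.$$ (These two LPs are not dual to each other.)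
   Context: Let $A$ be a real $K\times J$ matrix, $\beta,b\in\mathbb{R}^K$, $\gamma,c\in\mathbb{R}^J$, $T>0$. M-CLP: maximize $\int_{0-}^T(\gamma+(T-t)c)^\top dU(t)$ over nonnegative, non-decreasing, right-continuous $U:[0,T]\to\mathbb{R}^J$ with $U(0-)=0$, subject to $AU(t)\le\beta+bt$, $0\le t\le T$. M-CLP$^*$: minimize $\int_{0-}^T(\beta+(T-t)b)^\top dP(t)$ over nonnegative, non-decreasing, right-continuous $P:[0,T]\to\mathbb{R}^K$ with $P(0-)=0$, subject to $A^\top P(t)\ge\gamma+ct$. Non-Degeneracy Assumption I: $b$ is not a linear combination of fewer than $K$ columns of $[A\ I]$ and $c$ is not a linear combination of fewer than $J$ columns of $[A^\top\ I]$. Bases: index sets $\mathcal{K}\subseteq\{1..K\},\mathcal{J}\subseteq\{1..J\}$ such that $\dot x_k$ ($k\in\mathcal{K}$), $u_j$ ($j\notin\mathcal{J}$) are $K$ variables with independent columns in $[A\ I]$; primal basic solution solves $Au+\dot x=b$ with $u_j=0$ ($j\in\mathcal{J}$), $\dot x_k=0$ ($k\notin\mathcal{K}$); dual basic solution solves $A^\top p-\dot q=c$ with $p_k=0$ ($k\in\mathcal{K}$), $\dot q_j=0$ ($j\notin\mathcal{J}$). Admissible: $u,p\ge0$. Adjacent: one pivot apart, primal variable $v_n$ leaving from $B_n$ to $B_{n+1}$. A base sequence consists of admissible, consecutively adjacent bases $B_1..B_N$ (index sets $\mathcal{K}_n,\mathcal{J}_n$, rates $u^n,\dot x^n,p^n,\dot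 q^n$) plus index sets $\mathcal{K}_0,\mathcal{J}_0,\mathcal{K}_{N+1},\mathcal{J}_{N+1}$ with $\mathcal{K}_0\subseteq\mathcal{K}_1$, $\mathcal{J}_{N+1}\subseteq\mathcal{J}_N$. The base-sequence system in unknowns $\mathbf{u}^0,\mathbf{u}^N,q^N,\mathbf{q}^0\in\mathbb{R}^J$, $x^0,\mathbf{x}^N,\mathbf{p}^0,\mathbf{p}^N\in\mathbb{R}^K$, $\tau_1..\tau_N$, with $x^n=x^0+\sum_{m\le n}\dot x^m\tau_m$, $q^n=q^N+\sum_{m>n}\dot q^m\tau_m$, is: (a) $x^n_k=0$ if $v_n=\dot x_k$, $q^n_j=0$ if $v_n=u_j$ ($n=1..N-1$); (b) $\sum\tau_n=T$; (c) $\mathbf{u}^0_j=0$ ($j\in\mathcal{J}_0$), $x^0_k=0$ ($k\notin\mathcal{K}_0$), $\mathbf{p}^0_k=0$ ($k\in\mathcal{K}_0$), $\mathbf{q}^0_j=0$ ($j\notin\mathcal{J}_0$), $\mathbf{p}^N_k=0$ ($k\in\mathcal{K}_{N+1}$), $q^N_j=0$ ($j\notin\mathcal{J}_{N+1}$), $\mathbf{u}^N_j=0$ ($j\in\mathcal{J}_{N+1}$), $\mathbf{x}^N_k=0$ ($k\notin\mathcal{K}_{N+1}$); (d) $A\mathbf{u}^0+x^0=\beta$, $A^\top\mathbf{p}^N-q^N=\gamma$; (e) $A\mathbf{u}^N+\mathbf{x}^N-x^N=0$, $A^\top\mathbf{p}^0-\mathbf{q}^0+q^0=0$. Constructed functions: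 $t_n=\sum_{m\le n}\tau_m$, $u(t)=u^n$ on $(t_{n-1},t_n)$, $U(t)=\mathbf{u}^0+\int_0^tu$ ($t<T$), $U(T)=U(T-)+\mathbf{u}^N$; $p(s)=p^n$ on $(T-t_n,T-t_{n-1})$, $P(s)=\mathbf{p}^N+\int_0^sp$ ($s<T$), $P(T)=P(T-)+\mathbf{p}^0$. *)

theory Defs
  imports "HOL-Analysis.Analysis"
begin

text \<open>The matrix A is a real K x J matrix, rendered as
  A :: real^'j^'k (rows indexed by 'k, columns by 'j).
  Primal variables are encoded in the sum type 'k + 'j: Inl k stands for the
  slack rate xdot_k, Inr j stands for u_j.\<close>

definition col_AI :: "real^'j^'k \<Rightarrow> ('k + 'j) \<Rightarrow> real^'k" where
  "col_AI A v = (case v of Inl k \<Rightarrow> axis k 1 | Inr j \<Rightarrow> column j A)"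

text \<open>Columns of [A^T I]: Inl j is the identity column e_j, Inr k is column k of A^T.\<close>
definition col_ATI :: "real^'j^'k \<Rightarrow> ('j + 'k) \<Rightarrow> real^'j" where
  "col_ATI A v = (case v of Inl j \<Rightarrow> axis j 1 | Inr k \<Rightarrow> column k (transpose A))"

definition nondeg_I :: "real^'j^'k \<Rightarrow> real^'k \<Rightarrow> real^'j \<Rightarrow> bool" where
  "nondeg_I A b c \<longleftrightarrow>
     (\<forall>S (w::('k + 'j) \<Rightarrow> real). card S < CARD('k) \<longrightarrow> b \<noteq> (\<Sum>v\<in>S. w v *\<^sub>R col_AI A v)) \<and>
     (\<forall>S (w::('j + 'k) \<Rightarrow> real). card S < CARD('j) \<longrightarrow> c \<noteq> (\<Sum>v\<in>S. w v *\<^sub>R col_ATI A v))"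

definition basic_vars :: "'k set \<Rightarrow> 'j set \<Rightarrow> ('k + 'j) set" where
  "basic_vars Ks Js = Inl ` Ks \<union> Inr ` (- Js)"

text \<open>(Ks, Js) is a basis: the K variables xdot_k (k in Ks), u_j (j not in Js)
  have linearly independent columns in [A I].\<close>
definition is_basis :: "real^'j^'k \<Rightarrow> 'k set \<Rightarrow> 'j set \<Rightarrow> bool" where
  "is_basis A Ks Js \<longleftrightarrow> card Ks + card (- Js) = CARD('k) \<and>
     (\<forall>u xd. (\<forall>j\<in>Js. u $ j = 0) \<and> (\<forall>k. k \<notin> Ks \<longrightarrow> xd $ k = 0) \<and> A *v u + xd = 0
        \<longrightarrow> u = 0 \<and> xd = 0)"

definition primal_basic_sol :: "real^'j^'k \<Rightarrow> real^'k \<Rightarrow> 'k set \<Rightarrow> 'j set \<Rightarrow> real^'j \<Rightarrow> real^'k \<Rightarrow> bool" where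
  "primal_basic_sol A b Ks Js u xd \<longleftrightarrow>
     A *v u + xd = b \<and> (\<forall>j\<in>Js. u $ j = 0) \<and> (\<forall>k. k \<notin> Ks \<longrightarrow> xd $ k = 0)"

definition dual_basic_sol :: "real^'j^'k \<Rightarrow> real^'j \<Rightarrow> 'k set \<Rightarrow> 'j set \<Rightarrow> real^'k \<Rightarrow> real^'j \<Rightarrow> bool" where
  "dual_basic_sol A c Ks Js p qd \<longleftrightarrow>
     transpose A *v p - qd = c \<and> (\<forall>k\<in>Ks. p $ k = 0) \<and> (\<forall>j. j \<notin> Js \<longrightarrow> qd $ j = 0)"

definition adjacent :: "'k set \<Rightarrow> 'j set \<Rightarrow> 'k set \<Rightarrow> 'j set \<Rightarrow> bool" where
  "adjacent Ks Js Ks' Js' \<longleftrightarrow>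
     card (basic_vars Ks Js - basic_vars Ks' Js') = 1 \<and>
     card (basic_vars Ks' Js' - basic_vars Ks Js) = 1"

definition leaving :: "(nat \<Rightarrow> 'k set) \<Rightarrow> (nat \<Rightarrow> 'j set) \<Rightarrow> nat \<Rightarrow> 'k + 'j" where
  "leaving Ks Js n = the_elem (basic_vars (Ks n) (Js n) - basic_vars (Ks (Suc n)) (Js (Suc n)))"

text \<open>Base sequence B_1..B_N with index sets Ks n, Js n (n = 0..N+1) and rates
  u n, xd n, p n, qd n (n = 1..N).\<close>
definition base_sequence ::
  "real^'j^'k \<Rightarrow> real^'k \<Rightarrow> real^'j \<Rightarrow> nat \<Rightarrow> (nat \<Rightarrow> 'k set) \<Rightarrow> (nat \<Rightarrow> 'j set) \<Rightarrow>
   (nat \<Rightarrow> real^'j) \<Rightarrow> (nat \<Rightarrow> real^'k) \<Rightarrow> (nat \<Rightarrow> real^'k) \<Rightarrow> (nat \<Rightarrow> real^'j) \<Rightarrow> bool" where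
  "base_sequence A b c N Ks Js u xd p qd \<longleftrightarrow>
     1 \<le> N \<and>
     (\<forall>n\<in>{1..N}. is_basis A (Ks n) (Js n) \<and>
        primal_basic_sol A b (Ks n) (Js n) (u n) (xd n) \<and>
        dual_basic_sol A c (Ks n) (Js n) (p n) (qd n) \<and>
        0 \<le> u n \<and> 0 \<le> p n) \<and>
     (\<forall>n\<in>{1..<N}. adjacent (Ks n) (Js n) (Ks (Suc n)) (Js (Suc n))) \<and>
     Ks 0 \<subseteq> Ks 1 \<and> Js (Suc N) \<subseteq> Js N"

definition xseq :: "real^'k \<Rightarrow> (nat \<Rightarrow> real^'k) \<Rightarrow> (nat \<Rightarrow> real) \<Rightarrow> nat \<Rightarrow> real^'k" where
  "xseq x0 xd \<tau> n = x0 + (\<Sum>m\<in>{1..n}. \<tau> m *\<^sub>R xd m)"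

definition qseq :: "real^'j \<Rightarrow> (nat \<Rightarrow> real^'j) \<Rightarrow> (nat \<Rightarrow> real) \<Rightarrow> nat \<Rightarrow> nat \<Rightarrow> real^'j" where
  "qseq qN qd \<tau> N n = qN + (\<Sum>m\<in>{n<..N}. \<tau> m *\<^sub>R qd m)"

text \<open>The base-sequence system (a)-(e). Arguments: u0b = bold u^0, uNb = bold u^N,
  qN = q^N, q0b = bold q^0, x0 = x^0, xNb = bold x^N, p0b = bold p^0, pNb = bold p^N.\<close>
definition bs_system ::
  "real^'j^'k \<Rightarrow> real^'k \<Rightarrow> real^'j \<Rightarrow> real \<Rightarrow> nat \<Rightarrow> (nat \<Rightarrow> 'k set) \<Rightarrow> (nat \<Rightarrow> 'j set) \<Rightarrow>
   (nat \<Rightarrow> real^'k) \<Rightarrow> (nat \<Rightarrow> real^'j) \<Rightarrow>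
   real^'j \<Rightarrow> real^'j \<Rightarrow> real^'j \<Rightarrow> real^'j \<Rightarrow> real^'k \<Rightarrow> real^'k \<Rightarrow> real^'k \<Rightarrow> real^'k \<Rightarrow>
   (nat \<Rightarrow> real) \<Rightarrow> bool" where
  "bs_system A \<beta> \<gamma> T N Ks Js xd qd u0b uNb qN q0b x0 xNb p0b pNb \<tau> \<longleftrightarrow>
     (\<forall>n\<in>{1..<N}. (case leaving Ks Js n of
          Inl k \<Rightarrow> xseq x0 xd \<tau> n $ k = 0
        | Inr j \<Rightarrow> qseq qN qd \<tau> N n $ j = 0)) \<and>
     (\<Sum>n\<in>{1..N}. \<tau> n) = T \<and>
     (\<forall>j\<in>Js 0. u0b $ j = 0) \<and> (\<forall>k. k \<notin> Ks 0 \<longrightarrow> x0 $ k = 0) \<and>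
     (\<forall>k\<in>Ks 0. p0b $ k = 0) \<and> (\<forall>j. j \<notin> Js 0 \<longrightarrow> q0b $ j = 0) \<and>
     (\<forall>k\<in>Ks (Suc N). pNb $ k = 0) \<and> (\<forall>j. j \<notin> Js (Suc N) \<longrightarrow> qN $ j = 0) \<and>
     (\<forall>j\<in>Js (Suc N). uNb $ j = 0) \<and> (\<forall>k. k \<notin> Ks (Suc N) \<longrightarrow> xNb $ k = 0) \<and>
     A *v u0b + x0 = \<beta> \<and> transpose A *v pNb - qN = \<gamma> \<and>
     A *v uNb + xNb - xseq x0 xd \<tau> N = 0 \<and>
     transpose A *v p0b - q0b + qseq qN qd \<tau> N 0 = 0"

definition bs_nonneg ::
  "nat \<Rightarrow> (nat \<Rightarrow> real^'k) \<Rightarrow> (nat \<Rightarrow> real^'j) \<Rightarrow>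
   real^'j \<Rightarrow> real^'j \<Rightarrow> real^'j \<Rightarrow> real^'j \<Rightarrow> real^'k \<Rightarrow> real^'k \<Rightarrow> real^'k \<Rightarrow> real^'k \<Rightarrow>
   (nat \<Rightarrow> real) \<Rightarrow> bool" where
  "bs_nonneg N xd qd u0b uNb qN q0b x0 xNb p0b pNb \<tau> \<longleftrightarrow>
     0 \<le> u0b \<and> 0 \<le> uNb \<and> 0 \<le> qN \<and> 0 \<le> q0b \<and> 0 \<le> x0 \<and> 0 \<le> xNb \<and> 0 \<le> p0b \<and> 0 \<le> pNb \<and>
     (\<forall>n\<in>{1..N}. 0 \<le> \<tau> n) \<and>
     (\<forall>n\<in>{0..N}. 0 \<le> xseq x0 xd \<tau> n \<and> 0 \<le> qseq qN qd \<tau> N n)"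

definition bnd_primal_feasible ::
  "real^'j^'k \<Rightarrow> real^'k \<Rightarrow> real^'k \<Rightarrow> real \<Rightarrow> real^'k \<Rightarrow> real^'j \<Rightarrow> real^'j \<Rightarrow> real^'j \<Rightarrow> bool" where
  "bnd_primal_feasible A \<beta> b T xlow Uc u0 uN \<longleftrightarrow>
     A *v u0 \<le> \<beta> - xlow \<and> A *v u0 + A *v uN \<le> \<beta> + T *\<^sub>R b - A *v Uc \<and> 0 \<le> u0 \<and> 0 \<le> uN"

definition bnd_primal_optimal ::
  "real^'j^'k \<Rightarrow> real^'k \<Rightarrow> real^'k \<Rightarrow> real^'j \<Rightarrow> real^'j \<Rightarrow> real \<Rightarrow> real^'k \<Rightarrow> real^'j \<Rightarrow> real^'j \<Rightarrow> real^'j \<Rightarrow> bool" where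
  "bnd_primal_optimal A \<beta> b \<gamma> c T xlow Uc u0 uN \<longleftrightarrow>
     bnd_primal_feasible A \<beta> b T xlow Uc u0 uN \<and>
     (\<forall>u0' uN'. bnd_primal_feasible A \<beta> b T xlow Uc u0' uN' \<longrightarrow>
        (\<gamma> + T *\<^sub>R c) \<bullet> u0' + \<gamma> \<bullet> uN' \<le> (\<gamma> + T *\<^sub>R c) \<bullet> u0 + \<gamma> \<bullet> uN)"

definition bnd_dual_feasible ::
  "real^'j^'k \<Rightarrow> real^'j \<Rightarrow> real^'j \<Rightarrow> real \<Rightarrow> real^'j \<Rightarrow> real^'k \<Rightarrow> real^'k \<Rightarrow> real^'k \<Rightarrow> bool" where
  "bnd_dual_feasible A \<gamma> c T qlow Pc pN p0 \<longleftrightarrow>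
     \<gamma> + qlow \<le> transpose A *v pN \<and>
     \<gamma> + T *\<^sub>R c - transpose A *v Pc \<le> transpose A *v pN + transpose A *v p0 \<and>
     0 \<le> pN \<and> 0 \<le> p0"

definition bnd_dual_optimal ::
  "real^'j^'k \<Rightarrow> real^'k \<Rightarrow> real^'k \<Rightarrow> real^'j \<Rightarrow> real^'j \<Rightarrow> real \<Rightarrow> real^'j \<Rightarrow> real^'k \<Rightarrow> real^'k \<Rightarrow> real^'k \<Rightarrow> bool" where
  "bnd_dual_optimal A \<beta> b \<gamma> c T qlow Pc pN p0 \<longleftrightarrow>
     bnd_dual_feasible A \<gamma> c T qlow Pc pN p0 \<and>
     (\<forall>pN' p0'. bnd_dual_feasible A \<gamma> c T qlow Pc pN' p0' \<longrightarrow>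
        (\<beta> + T *\<^sub>R b) \<bullet> pN + \<beta> \<bullet> p0 \<le> (\<beta> + T *\<^sub>R b) \<bullet> pN' + \<beta> \<bullet> p0')"

end

theory Submission
  imports Defs
begin

(* Each boundary LP is shown optimal by an explicit certificate built from the same
   base-sequence solution (the two LPs are not dual to each other): for the primal one
   the multipliers are (p0 + P-check, pN) with reduced costs (q0, qN), for the dual one
   (uN + U-check, u0) with slacks (xN, x0).  All conditions but one follow from the
   linear identities (d), (e) and the complementarity conditions (c) of the system.
   The remaining complementary slackness condition, for x-underline (resp. q-underline),
   is the combinatorial heart: if a slack trajectory x^n_k stays positive, x_k is never
   the leaving variable of a pivot, so it stays basic and every dual rate p^n_k vanishes. *)

lemma inner_matrix_transpose:
  fixes A :: "real^'j::finite^'k::finite"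
  shows "(A *v x) \<bullet> y = x \<bullet> (transpose A *v y)"
  by (metis dot_lmul_matrix vector_transpose_matrix)

lemma inner_transpose_left:
  fixes A :: "real^'j::finite^'k::finite"
  shows "(transpose A *v y) \<bullet> x = y \<bullet> (A *v x)"
  by (metis inner_matrix_transpose inner_commute)

lemma inner_mono_nonneg:
  fixes y a b :: "real^'n::finite"
  assumes "0 \<le> y" "a \<le> b"
  shows "y \<bullet> a \<le> y \<bullet> b"
  using assms unfolding inner_vec_def less_eq_vec_def by (auto intro!: sum_mono mult_left_mono)

lemma inner_eq_0_if_complementary:
  fixes y a :: "real^'n::finite"
  assumes "\<And>i. y $ i = 0 \<or> a $ i = 0"
  shows "y \<bullet> a = 0"
  using assms unfolding inner_vec_def by (auto intro!: sum.neutral)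

lemma lp_max_certificate:
  fixes A :: "real^'j::finite^'k::finite"
  assumes y: "0 \<le> ya" "0 \<le> yb"
    and sa: "transpose A *v (ya + yb) = ga + sa" "0 \<le> sa"
    and sb: "transpose A *v yb = gb + sb" "0 \<le> sb"
    and slack_u: "sa \<bullet> u0 = 0" "sb \<bullet> uN = 0"
    and slack_y: "ya \<bullet> (ra - A *v u0) = 0" "yb \<bullet> (rb - A *v u0 - A *v uN) = 0"
    and feas: "A *v u0' \<le> ra" "A *v u0' + A *v uN' \<le> rb" "0 \<le> u0'" "0 \<le> uN'"
  shows "ga \<bullet> u0' + gb \<bullet> uN' \<le> ga \<bullet> u0 + gb \<bullet> uN"
proof -
  have "ga \<le> transpose A *v (ya + yb)" "gb \<le> transpose A *v yb"
    using sa sb by (simp_all add: less_eq_vec_def)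
  then have "ga \<bullet> u0' + gb \<bullet> uN' \<le> (transpose A *v (ya + yb)) \<bullet> u0' + (transpose A *v yb) \<bullet> uN'"
    using inner_mono_nonneg[OF feas(3)] inner_mono_nonneg[OF feas(4)]
    by (metis add_mono inner_commute)
  also have "\<dots> = ya \<bullet> (A *v u0') + yb \<bullet> (A *v u0' + A *v uN')"
    by (simp only: inner_transpose_left) (simp add: inner_add_left inner_add_right)
  also have "\<dots> \<le> ya \<bullet> ra + yb \<bullet> rb"
    using inner_mono_nonneg[OF y(1) feas(1)] inner_mono_nonneg[OF y(2) feas(2)] by linarith
  also have "\<dots> = ya \<bullet> (A *v u0) + yb \<bullet> (A *v u0 + A *v uN)"
    using slack_y by (simp add: inner_diff_right inner_add_right)
  also have "\<dots> = (transpose A *v (ya + yb)) \<bullet> u0 + (transpose A *v yb) \<bullet> uN"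
    by (simp only: inner_transpose_left) (simp add: inner_add_left inner_add_right)
  also have "\<dots> = ga \<bullet> u0 + gb \<bullet> uN"
    using sa sb slack_u by (simp add: inner_add_left)
  finally show ?thesis .
qed

lemma lp_min_certificate:
  fixes A :: "real^'j::finite^'k::finite"
  assumes z: "0 \<le> za" "0 \<le> zb"
    and ta: "A *v (za + zb) + ta = ra" "0 \<le> ta"
    and tb: "A *v zb + tb = rb" "0 \<le> tb"
    and slack_p: "ta \<bullet> pN = 0" "tb \<bullet> p0 = 0"
    and slack_z: "za \<bullet> (transpose A *v pN - ga) = 0"
        "zb \<bullet> (transpose A *v pN + transpose A *v p0 - gb) = 0"
    and feas: "ga \<le> transpose A *v pN'" "gb \<le> transpose A *v pN' + transpose A *v p0'"
        "0 \<le> pN'" "0 \<le> p0'"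
  shows "ra \<bullet> pN + rb \<bullet> p0 \<le> ra \<bullet> pN' + rb \<bullet> p0'"
proof -
  have "ra \<bullet> pN + rb \<bullet> p0 = (A *v (za + zb)) \<bullet> pN + (A *v zb) \<bullet> p0"
    using ta tb slack_p by (auto simp: inner_add_left inner_add_right inner_commute)
  also have "\<dots> = za \<bullet> (transpose A *v pN) + zb \<bullet> (transpose A *v pN + transpose A *v p0)"
    by (simp add: inner_matrix_transpose inner_add_left inner_add_right)
  also have "\<dots> = za \<bullet> ga + zb \<bullet> gb"
    using slack_z by (simp add: inner_diff_right)
  also have "\<dots> \<le> za \<bullet> (transpose A *v pN') + zb \<bullet> (transpose A *v pN' + transpose A *v p0')"
    using inner_mono_nonneg[OF z(1) feas(1)] inner_mono_nonneg[OF z(2) feas(2)] by linarith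
  also have "\<dots> = (A *v (za + zb)) \<bullet> pN' + (A *v zb) \<bullet> p0'"
    by (simp add: inner_matrix_transpose inner_add_left inner_add_right)
  also have "\<dots> \<le> ra \<bullet> pN' + rb \<bullet> p0'"
  proof -
    have "A *v (za + zb) \<le> ra" "A *v zb \<le> rb"
      using ta tb by (auto simp: less_eq_vec_def)
    then show ?thesis
      using inner_mono_nonneg[OF feas(3)] inner_mono_nonneg[OF feas(4)] by (metis add_mono inner_commute)
  qed
  finally show ?thesis .
qed

lemma matrix_vector_mult_weighted_sum:
  fixes M :: "real^'j::finite^'k::finite"
  assumes "\<And>n. n \<in> I \<Longrightarrow> M *v w n = r + s n"
  shows "M *v (\<Sum>n\<in>I. \<tau> n *\<^sub>R w n) = (\<Sum>n\<in>I. \<tau> n) *\<^sub>R r + (\<Sum>n\<in>I. \<tau> n *\<^sub>R s n)"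
proof -
  have "M *v (\<Sum>n\<in>I. \<tau> n *\<^sub>R w n) = (\<Sum>n\<in>I. \<tau> n *\<^sub>R r + \<tau> n *\<^sub>R s n)"
    using assms by (simp add: vec.sum matrix_vector_mult_scaleR scaleR_add_right)
  then show ?thesis by (simp add: sum.distrib scaleR_sum_left)
qed

lemma running_min_bounds:
  fixes f :: "'a \<Rightarrow> real"
  assumes "finite I" "I \<noteq> {}" "0 \<le> a" "\<And>n. n \<in> I \<Longrightarrow> 0 \<le> a + f n"
  shows "0 \<le> a + min 0 (Min (f ` I))" "a + min 0 (Min (f ` I)) \<le> a"
    and "\<And>n. n \<in> I \<Longrightarrow> a + min 0 (Min (f ` I)) \<le> a + f n"
proof -
  have "Min (f ` I) \<in> f ` I" using assms(1,2) by (intro Min_in) auto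
  then obtain m where "m \<in> I" "Min (f ` I) = f m" by blast
  then show "0 \<le> a + min 0 (Min (f ` I))" using assms(3,4) by (simp add: min_def)
  show "a + min 0 (Min (f ` I)) \<le> a" by simp
  show "a + min 0 (Min (f ` I)) \<le> a + f n" if "n \<in> I" for n
    using that assms(1) by (simp add: min.coboundedI2)
qed

lemma leaving_eqI:
  assumes "adjacent (Ks n) (Js n) (Ks (Suc n)) (Js (Suc n))"
    and "v \<in> basic_vars (Ks n) (Js n)" "v \<notin> basic_vars (Ks (Suc n)) (Js (Suc n))"
  shows "leaving Ks Js n = v"
proof -
  let ?D = "basic_vars (Ks n) (Js n) - basic_vars (Ks (Suc n)) (Js (Suc n))"
  have "card ?D = 1" using assms(1) by (simp add: adjacent_def)
  moreover have "v \<in> ?D" using assms(2,3) by blast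
  ultimately have "?D = {v}" by (metis card_1_singletonE singletonD)
  then show ?thesis by (simp add: leaving_def)
qed

lemma slack_stays_basic:
  assumes adj: "\<And>n. n \<in> {1..<N} \<Longrightarrow> adjacent (Ks n) (Js n) (Ks (Suc n)) (Js (Suc n))"
    and start: "k \<in> Ks 1"
    and never_leaves: "\<And>n. n \<in> {1..<N} \<Longrightarrow> leaving Ks Js n \<noteq> Inl k"
    and n: "1 \<le> n" "n \<le> N"
  shows "k \<in> Ks n"
  using n
proof (induction n rule: dec_induct)
  case base show ?case by (rule start)
next
  case (step n)
  then have "n \<in> {1..<N}" and "k \<in> Ks n" by simp_all
  show ?case
  proof (rule ccontr)
    assume "k \<notin> Ks (Suc n)"
    then have "leaving Ks Js n = Inl k"
      using \<open>k \<in> Ks n\<close> by (intro leaving_eqI adj \<open>n \<in> {1..<N}\<close>) (auto simp: basic_vars_def)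
    then show False using never_leaves \<open>n \<in> {1..<N}\<close> by blast
  qed
qed

lemma u_stays_nonbasic:
  assumes adj: "\<And>n. n \<in> {1..<N} \<Longrightarrow> adjacent (Ks n) (Js n) (Ks (Suc n)) (Js (Suc n))"
    and start: "j \<in> Js N"
    and never_leaves: "\<And>n. n \<in> {1..<N} \<Longrightarrow> leaving Ks Js n \<noteq> Inr j"
    and n: "1 \<le> n" "n \<le> N"
  shows "j \<in> Js n"
  using n(2,1)
proof (induction n rule: inc_induct)
  case base show ?case by (rule start)
next
  case (step n)
  then have "n \<in> {1..<N}" by simp
  show ?case
  proof (rule ccontr)
    assume "j \<notin> Js n"
    then have "leaving Ks Js n = Inr j"
      using step by (intro leaving_eqI adj \<open>n \<in> {1..<N}\<close>) (auto simp: basic_vars_def)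
    then show False using never_leaves \<open>n \<in> {1..<N}\<close> by blast
  qed
qed

lemma xseq_component: "xseq x0 xd \<tau> n $ k = x0 $ k + (\<Sum>m\<in>{1..n}. xd m $ k * \<tau> m)"
  by (simp add: xseq_def sum_component mult.commute)

lemma qseq_component: "qseq qN qd \<tau> N n $ j = qN $ j + (\<Sum>m\<in>{Suc n..N}. qd m $ j * \<tau> m)"
  by (simp add: qseq_def sum_component mult.commute atLeastSucAtMost_greaterThanAtMost)

lemma xlow_envelope:
  assumes "1 \<le> N" "0 \<le> x0" "\<forall>n\<in>{0..N}. 0 \<le> xseq x0 xd \<tau> n"
    and xlow: "\<And>k. xlow $ k = - min 0 (Min ((\<lambda>n. \<Sum>m\<in>{1..n}. xd m $ k * \<tau> m) ` {1..N}))"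
  shows "0 \<le> x0 $ k - xlow $ k"
    and "n \<in> {0..N} \<Longrightarrow> x0 $ k - xlow $ k \<le> xseq x0 xd \<tau> n $ k"
proof -
  let ?f = "\<lambda>n. \<Sum>m\<in>{1..n}. xd m $ k * \<tau> m"
  have low: "x0 $ k - xlow $ k = x0 $ k + min 0 (Min (?f ` {1..N}))" by (simp add: xlow)
  have nonneg: "0 \<le> x0 $ k + ?f n" if "n \<in> {1..N}" for n
    using assms(3) that by (auto simp: less_eq_vec_def xseq_component)
  have fin: "finite {1..N}" "{1..N} \<noteq> {}" using assms(1) by auto
  have "0 \<le> x0 $ k" using assms(2) by (simp add: less_eq_vec_def)
  note bounds = running_min_bounds[where f = ?f, OF fin this nonneg]
  show "0 \<le> x0 $ k - xlow $ k" using bounds(1) low by simp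
  show "x0 $ k - xlow $ k \<le> xseq x0 xd \<tau> n $ k" if "n \<in> {0..N}"
  proof (cases "n = 0")
    case True then show ?thesis using bounds(2) low by (simp add: xseq_component)
  next
    case False then show ?thesis using bounds(3)[of n] low that by (simp add: xseq_component)
  qed
qed

lemma qlow_envelope:
  assumes "1 \<le> N" "\<forall>n\<in>{0..N}. 0 \<le> qseq qN qd \<tau> N n"
    and qlow: "\<And>j. qlow $ j = - min 0 (Min ((\<lambda>n. \<Sum>m\<in>{n..N}. qd m $ j * \<tau> m) ` {1..N}))"
  shows "0 \<le> qN $ j - qlow $ j"
    and "n \<in> {0..N} \<Longrightarrow> qN $ j - qlow $ j \<le> qseq qN qd \<tau> N n $ j"
proof -
  let ?f = "\<lambda>n. \<Sum>m\<in>{n..N}. qd m $ j * \<tau> m"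
  have low: "qN $ j - qlow $ j = qN $ j + min 0 (Min (?f ` {1..N}))" by (simp add: qlow)
  have nonneg: "0 \<le> qN $ j + ?f n" if "n \<in> {1..N}" for n
  proof -
    have "0 \<le> qseq qN qd \<tau> N (n - 1) $ j" using assms(2) that by (auto simp: less_eq_vec_def)
    then show ?thesis using that by (simp add: qseq_component)
  qed
  have fin: "finite {1..N}" "{1..N} \<noteq> {}" using assms(1) by auto
  have "0 \<le> qseq qN qd \<tau> N N $ j" using assms(2) by (simp add: less_eq_vec_def)
  then have "0 \<le> qN $ j" by (simp add: qseq_component)
  note bounds = running_min_bounds[where f = ?f, OF fin this nonneg]
  show "0 \<le> qN $ j - qlow $ j" using bounds(1) low by simp
  show "qN $ j - qlow $ j \<le> qseq qN qd \<tau> N n $ j" if "n \<in> {0..N}"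
  proof (cases "n = N")
    case True then show ?thesis using bounds(2) low by (simp add: qseq_component)
  next
    case False then show ?thesis using bounds(3)[of "Suc n"] low that by (simp add: qseq_component)
  qed
qed

lemma boundary_identities:
  assumes bsq: "base_sequence A b c N Ks Js u xd p qd"
    and sys: "bs_system A \<beta> \<gamma> T N Ks Js xd qd u0b uNb qN q0b x0 xNb p0b pNb \<tau>"
  shows "A *v u0b = \<beta> - x0"
    and "A *v uNb = xseq x0 xd \<tau> N - xNb"
    and "transpose A *v pNb = \<gamma> + qN"
    and "transpose A *v p0b = q0b - qseq qN qd \<tau> N 0"
    and "A *v (\<Sum>n\<in>{1..N}. \<tau> n *\<^sub>R u n) = T *\<^sub>R b + x0 - xseq x0 xd \<tau> N"
    and "transpose A *v (\<Sum>n\<in>{1..N}. \<tau> n *\<^sub>R p n) = T *\<^sub>R c + qseq qN qd \<tau> N 0 - qN"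
proof -
  have eqs: "A *v u0b + x0 = \<beta>" "transpose A *v pNb - qN = \<gamma>"
      "A *v uNb + xNb - xseq x0 xd \<tau> N = 0" "transpose A *v p0b - q0b + qseq qN qd \<tau> N 0 = 0"
      and total: "(\<Sum>n\<in>{1..N}. \<tau> n) = T"
    using sys unfolding bs_system_def by blast+
  then show "A *v u0b = \<beta> - x0" "A *v uNb = xseq x0 xd \<tau> N - xNb"
      "transpose A *v pNb = \<gamma> + qN" "transpose A *v p0b = q0b - qseq qN qd \<tau> N 0"
    by (simp_all add: algebra_simps)
  have primal_rate: "A *v u n = b + - xd n" and dual_rate: "transpose A *v p n = c + qd n"
    if "n \<in> {1..N}" for n
    using bsq that unfolding base_sequence_def primal_basic_sol_def dual_basic_sol_def
    by (auto simp: algebra_simps)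
  note rates =
    matrix_vector_mult_weighted_sum[where I = "{1..N}" and \<tau> = \<tau> and M = A and w = u and s = "\<lambda>n. - xd n", OF primal_rate]
    matrix_vector_mult_weighted_sum[where I = "{1..N}" and \<tau> = \<tau> and M = "transpose A" and w = p and s = qd, OF dual_rate]
  have "{0<..N} = {1..N}" by auto
  then show "A *v (\<Sum>n\<in>{1..N}. \<tau> n *\<^sub>R u n) = T *\<^sub>R b + x0 - xseq x0 xd \<tau> N"
      "transpose A *v (\<Sum>n\<in>{1..N}. \<tau> n *\<^sub>R p n) = T *\<^sub>R c + qseq qN qd \<tau> N 0 - qN"
    using rates unfolding total by (simp_all add: xseq_def qseq_def sum_negf)
qed

(* If the trajectory x^n_k never touches 0, then x_k is basic at time 0, never leaves the
  basis, and hence p^n_k = 0 for all n and p0_k = 0. *)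
lemma primal_boundary_slackness:
  assumes bsq: "base_sequence A b c N Ks Js u xd p qd"
    and sys: "bs_system A \<beta> \<gamma> T N Ks Js xd qd u0b uNb qN q0b x0 xNb p0b pNb \<tau>"
    and nn: "bs_nonneg N xd qd u0b uNb qN q0b x0 xNb p0b pNb \<tau>"
    and xlow: "\<And>k. xlow $ k = - min 0 (Min ((\<lambda>n. \<Sum>m\<in>{1..n}. xd m $ k * \<tau> m) ` {1..N}))"
  shows "(p0b + (\<Sum>n\<in>{1..N}. \<tau> n *\<^sub>R p n)) $ k = 0 \<or> (x0 - xlow) $ k = 0"
proof (cases "\<exists>m\<in>{0..N}. xseq x0 xd \<tau> m $ k = 0")
  case True
  then obtain m where m: "m \<in> {0..N}" "xseq x0 xd \<tau> m $ k = 0" by blast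
  have "1 \<le> N" "0 \<le> x0" "\<forall>n\<in>{0..N}. 0 \<le> xseq x0 xd \<tau> n"
    using bsq nn unfolding base_sequence_def bs_nonneg_def by auto
  note envelope = xlow_envelope[OF this xlow]
  have "x0 $ k - xlow $ k = 0"
    using envelope(1)[of k] envelope(2)[OF m(1), of k] m(2) by linarith
  then show ?thesis by simp
next
  case False
  have leave: "\<And>n. n \<in> {1..<N} \<Longrightarrow> (case leaving Ks Js n of
          Inl k \<Rightarrow> xseq x0 xd \<tau> n $ k = 0 | Inr j \<Rightarrow> qseq qN qd \<tau> N n $ j = 0)"
    and x0_zero: "\<forall>k. k \<notin> Ks 0 \<longrightarrow> x0 $ k = 0" and p0_zero: "\<forall>k\<in>Ks 0. p0b $ k = 0"
    using sys unfolding bs_system_def by blast+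
  have adj: "\<And>n. n \<in> {1..<N} \<Longrightarrow> adjacent (Ks n) (Js n) (Ks (Suc n)) (Js (Suc n))"
    and "Ks 0 \<subseteq> Ks 1"
    and dual_sol: "\<And>n. n \<in> {1..N} \<Longrightarrow> dual_basic_sol A c (Ks n) (Js n) (p n) (qd n)"
    using bsq unfolding base_sequence_def by blast+
  have never_zero: "xseq x0 xd \<tau> m $ k \<noteq> 0" if "m \<in> {0..N}" for m
    using False that by blast
  have "x0 $ k \<noteq> 0" using never_zero[of 0] by (simp add: xseq_def)
  then have "k \<in> Ks 0" using x0_zero by blast
  have never_leaves: "leaving Ks Js n \<noteq> Inl k" if "n \<in> {1..<N}" for n
  proof
    assume "leaving Ks Js n = Inl k"
    then have "xseq x0 xd \<tau> n $ k = 0" using leave[OF that] by simp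
    moreover have "n \<in> {0..N}" using that by simp
    ultimately show False using never_zero by blast
  qed
  have "p n $ k = 0" if n: "n \<in> {1..N}" for n
  proof -
    have "k \<in> Ks n"
      using \<open>k \<in> Ks 0\<close> \<open>Ks 0 \<subseteq> Ks 1\<close> n by (intro slack_stays_basic[of N Ks Js k n, OF adj _ never_leaves]) auto
    then show ?thesis using dual_sol[OF n] unfolding dual_basic_sol_def by blast
  qed
  then show ?thesis using p0_zero \<open>k \<in> Ks 0\<close> by (simp add: sum_component)
qed

lemma dual_boundary_slackness:
  assumes bsq: "base_sequence A b c N Ks Js u xd p qd"
    and sys: "bs_system A \<beta> \<gamma> T N Ks Js xd qd u0b uNb qN q0b x0 xNb p0b pNb \<tau>"
    and nn: "bs_nonneg N xd qd u0b uNb qN q0b x0 xNb p0b pNb \<tau>"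
    and qlow: "\<And>j. qlow $ j = - min 0 (Min ((\<lambda>n. \<Sum>m\<in>{n..N}. qd m $ j * \<tau> m) ` {1..N}))"
  shows "(uNb + (\<Sum>n\<in>{1..N}. \<tau> n *\<^sub>R u n)) $ j = 0 \<or> (qN - qlow) $ j = 0"
proof (cases "\<exists>m\<in>{0..N}. qseq qN qd \<tau> N m $ j = 0")
  case True
  then obtain m where m: "m \<in> {0..N}" "qseq qN qd \<tau> N m $ j = 0" by blast
  have "1 \<le> N" "\<forall>n\<in>{0..N}. 0 \<le> qseq qN qd \<tau> N n"
    using bsq nn unfolding base_sequence_def bs_nonneg_def by auto
  note envelope = qlow_envelope[OF this qlow]
  have "qN $ j - qlow $ j = 0"
    using envelope(1)[of j] envelope(2)[OF m(1), of j] m(2) by linarith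
  then show ?thesis by simp
next
  case False
  have leave: "\<And>n. n \<in> {1..<N} \<Longrightarrow> (case leaving Ks Js n of
          Inl k \<Rightarrow> xseq x0 xd \<tau> n $ k = 0 | Inr j \<Rightarrow> qseq qN qd \<tau> N n $ j = 0)"
    and qN_zero: "\<forall>j. j \<notin> Js (Suc N) \<longrightarrow> qN $ j = 0"
    and uN_zero: "\<forall>j\<in>Js (Suc N). uNb $ j = 0"
    using sys unfolding bs_system_def by blast+
  have adj: "\<And>n. n \<in> {1..<N} \<Longrightarrow> adjacent (Ks n) (Js n) (Ks (Suc n)) (Js (Suc n))"
    and "Js (Suc N) \<subseteq> Js N"
    and primal_sol: "\<And>n. n \<in> {1..N} \<Longrightarrow> primal_basic_sol A b (Ks n) (Js n) (u n) (xd n)"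
    using bsq unfolding base_sequence_def by blast+
  have never_zero: "qseq qN qd \<tau> N m $ j \<noteq> 0" if "m \<in> {0..N}" for m
    using False that by blast
  have "qN $ j \<noteq> 0" using never_zero[of N] by (simp add: qseq_def)
  then have "j \<in> Js (Suc N)" using qN_zero by blast
  have never_leaves: "leaving Ks Js n \<noteq> Inr j" if "n \<in> {1..<N}" for n
  proof
    assume "leaving Ks Js n = Inr j"
    then have "qseq qN qd \<tau> N n $ j = 0" using leave[OF that] by simp
    moreover have "n \<in> {0..N}" using that by simp
    ultimately show False using never_zero by blast
  qed
  have "u n $ j = 0" if n: "n \<in> {1..N}" for n
  proof -
    have "j \<in> Js n"
      using \<open>j \<in> Js (Suc N)\<close> \<open>Js (Suc N) \<subseteq> Js N\<close> n
      by (intro u_stays_nonbasic[of N Ks Js j n, OF adj _ never_leaves]) auto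
    then show ?thesis using primal_sol[OF n] unfolding primal_basic_sol_def by blast
  qed
  then show ?thesis using uN_zero \<open>j \<in> Js (Suc N)\<close> by (simp add: sum_component)
qed

(* The primal boundary LP: (u0, uN) is feasible, and (p0 + P-check, pN) with reduced
  costs (q0, qN) is an optimality certificate for it. *)
lemma boundary_primal_optimal:
  assumes bsq: "base_sequence A b c N Ks Js u xd p qd"
    and sys: "bs_system A \<beta> \<gamma> T N Ks Js xd qd u0b uNb qN q0b x0 xNb p0b pNb \<tau>"
    and nn: "bs_nonneg N xd qd u0b uNb qN q0b x0 xNb p0b pNb \<tau>"
    and xlow: "\<And>k. xlow $ k = - min 0 (Min ((\<lambda>n. \<Sum>m\<in>{1..n}. xd m $ k * \<tau> m) ` {1..N}))"
  shows "bnd_primal_optimal A \<beta> b \<gamma> c T xlow (\<Sum>n\<in>{1..N}. \<tau> n *\<^sub>R u n) u0b uNb"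
proof -
  define Uc where "Uc = (\<Sum>n\<in>{1..N}. \<tau> n *\<^sub>R u n)"
  define Pc where "Pc = (\<Sum>n\<in>{1..N}. \<tau> n *\<^sub>R p n)"
  note ids = boundary_identities[OF bsq sys, folded Uc_def Pc_def]
  have nonneg: "0 \<le> u0b" "0 \<le> uNb" "0 \<le> q0b" "0 \<le> qN" "0 \<le> xNb" "0 \<le> p0b" "0 \<le> pNb"
      and x_nonneg: "1 \<le> N" "0 \<le> x0" "\<forall>n\<in>{0..N}. 0 \<le> xseq x0 xd \<tau> n"
    using nn bsq unfolding bs_nonneg_def base_sequence_def by auto
  have "0 \<le> Pc"
    using bsq nn unfolding Pc_def base_sequence_def bs_nonneg_def
    by (auto simp: less_eq_vec_def sum_component intro!: sum_nonneg)
  have compl: "\<And>i. q0b $ i = 0 \<or> u0b $ i = 0" "\<And>i. qN $ i = 0 \<or> uNb $ i = 0"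
      "\<And>i. pNb $ i = 0 \<or> xNb $ i = 0"
    using sys unfolding bs_system_def by blast+
  have "xlow \<le> x0" using xlow_envelope(1)[OF x_nonneg xlow] by (simp add: less_eq_vec_def)
  then have feasible: "bnd_primal_feasible A \<beta> b T xlow Uc u0b uNb"
    using nonneg unfolding bnd_primal_feasible_def ids by (simp add: algebra_simps)
  have "(\<gamma> + T *\<^sub>R c) \<bullet> u0' + \<gamma> \<bullet> uN' \<le> (\<gamma> + T *\<^sub>R c) \<bullet> u0b + \<gamma> \<bullet> uNb"
    if "bnd_primal_feasible A \<beta> b T xlow Uc u0' uN'" for u0' uN'
  proof (rule lp_max_certificate[where ya = "p0b + Pc" and yb = pNb and sa = q0b and sb = qN])
    show "transpose A *v (p0b + Pc + pNb) = \<gamma> + T *\<^sub>R c + q0b"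
      by (simp only: matrix_vector_right_distrib ids) (simp add: algebra_simps)
    have "(p0b + Pc) \<bullet> (x0 - xlow) = 0"
      using primal_boundary_slackness[OF bsq sys nn xlow] unfolding Pc_def
      by (rule inner_eq_0_if_complementary)
    then show "(p0b + Pc) \<bullet> (\<beta> - xlow - A *v u0b) = 0" by (simp add: ids)
    have "pNb \<bullet> xNb = 0" using compl(3) by (rule inner_eq_0_if_complementary)
    then show "pNb \<bullet> (\<beta> + T *\<^sub>R b - A *v Uc - A *v u0b - A *v uNb) = 0" by (simp add: ids)
    show "q0b \<bullet> u0b = 0" "qN \<bullet> uNb = 0"
      using compl(1,2) by (auto intro: inner_eq_0_if_complementary)
  qed (use that nonneg \<open>0 \<le> Pc\<close> ids in \<open>auto simp: bnd_primal_feasible_def\<close>)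
  then show ?thesis using feasible unfolding bnd_primal_optimal_def Uc_def by blast
qed

(* The dual boundary LP: (pN, p0) is feasible, and (uN + U-check, u0) with slacks
  (xN, x0) is an optimality certificate for it. *)
lemma boundary_dual_optimal:
  assumes bsq: "base_sequence A b c N Ks Js u xd p qd"
    and sys: "bs_system A \<beta> \<gamma> T N Ks Js xd qd u0b uNb qN q0b x0 xNb p0b pNb \<tau>"
    and nn: "bs_nonneg N xd qd u0b uNb qN q0b x0 xNb p0b pNb \<tau>"
    and qlow: "\<And>j. qlow $ j = - min 0 (Min ((\<lambda>n. \<Sum>m\<in>{n..N}. qd m $ j * \<tau> m) ` {1..N}))"
  shows "bnd_dual_optimal A \<beta> b \<gamma> c T qlow (\<Sum>n\<in>{1..N}. \<tau> n *\<^sub>R p n) pNb p0b"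
proof -
  define Uc where "Uc = (\<Sum>n\<in>{1..N}. \<tau> n *\<^sub>R u n)"
  define Pc where "Pc = (\<Sum>n\<in>{1..N}. \<tau> n *\<^sub>R p n)"
  note ids = boundary_identities[OF bsq sys, folded Uc_def Pc_def]
  have nonneg: "0 \<le> u0b" "0 \<le> uNb" "0 \<le> q0b" "0 \<le> x0" "0 \<le> xNb" "0 \<le> p0b" "0 \<le> pNb"
      and q_nonneg: "1 \<le> N" "\<forall>n\<in>{0..N}. 0 \<le> qseq qN qd \<tau> N n"
    using nn bsq unfolding bs_nonneg_def base_sequence_def by auto
  have "0 \<le> Uc"
    using bsq nn unfolding Uc_def base_sequence_def bs_nonneg_def
    by (auto simp: less_eq_vec_def sum_component intro!: sum_nonneg)
  have compl: "\<And>i. xNb $ i = 0 \<or> pNb $ i = 0" "\<And>i. x0 $ i = 0 \<or> p0b $ i = 0"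
      "\<And>i. u0b $ i = 0 \<or> q0b $ i = 0"
    using sys unfolding bs_system_def by blast+
  have "qlow \<le> qN" using qlow_envelope(1)[OF q_nonneg qlow] by (simp add: less_eq_vec_def)
  then have feasible: "bnd_dual_feasible A \<gamma> c T qlow Pc pNb p0b"
    using nonneg unfolding bnd_dual_feasible_def ids by (simp add: algebra_simps)
  have "(\<beta> + T *\<^sub>R b) \<bullet> pNb + \<beta> \<bullet> p0b \<le> (\<beta> + T *\<^sub>R b) \<bullet> pN' + \<beta> \<bullet> p0'"
    if "bnd_dual_feasible A \<gamma> c T qlow Pc pN' p0'" for pN' p0'
  proof (rule lp_min_certificate[where za = "uNb + Uc" and zb = u0b and ta = xNb and tb = x0
        and ga = "\<gamma> + qlow" and gb = "\<gamma> + T *\<^sub>R c - transpose A *v Pc"])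
    show "A *v (uNb + Uc + u0b) + xNb = \<beta> + T *\<^sub>R b"
      by (simp only: matrix_vector_right_distrib ids) (simp add: algebra_simps)
    show "xNb \<bullet> pNb = 0" "x0 \<bullet> p0b = 0"
      using compl(1,2) by (auto intro: inner_eq_0_if_complementary)
    have "(uNb + Uc) \<bullet> (qN - qlow) = 0"
      using dual_boundary_slackness[OF bsq sys nn qlow] unfolding Uc_def
      by (rule inner_eq_0_if_complementary)
    then show "(uNb + Uc) \<bullet> (transpose A *v pNb - (\<gamma> + qlow)) = 0" unfolding ids by simp
    have "u0b \<bullet> q0b = 0" using compl(3) by (rule inner_eq_0_if_complementary)
    then show "u0b \<bullet> (transpose A *v pNb + transpose A *v p0b - (\<gamma> + T *\<^sub>R c - transpose A *v Pc)) = 0"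
      unfolding ids by (simp add: algebra_simps)
  qed (use that nonneg \<open>0 \<le> Uc\<close> ids in \<open>auto simp: bnd_dual_feasible_def algebra_simps\<close>)
  then show ?thesis using feasible unfolding bnd_dual_optimal_def Pc_def by blast
qed

theorem mainTheorem4:
  fixes A :: "real^'j::finite^'k::finite"
    and \<beta> b :: "real^'k" and \<gamma> c :: "real^'j" and T :: real and N :: nat
    and Ks :: "nat \<Rightarrow> 'k set" and Js :: "nat \<Rightarrow> 'j set"
    and u :: "nat \<Rightarrow> real^'j" and xd :: "nat \<Rightarrow> real^'k"
    and p :: "nat \<Rightarrow> real^'k" and qd :: "nat \<Rightarrow> real^'j"
    and u0b uNb qN q0b :: "real^'j" and x0 xNb p0b pNb :: "real^'k"
    and \<tau> :: "nat \<Rightarrow> real"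
    and Uc :: "real^'j" and Pc :: "real^'k" and xlow :: "real^'k" and qlow :: "real^'j"
  assumes "0 < T"
    and "nondeg_I A b c"
    and "base_sequence A b c N Ks Js u xd p qd"
    and "bs_system A \<beta> \<gamma> T N Ks Js xd qd u0b uNb qN q0b x0 xNb p0b pNb \<tau>"
    and "bs_nonneg N xd qd u0b uNb qN q0b x0 xNb p0b pNb \<tau>"
    and "Uc = (\<Sum>n\<in>{1..N}. \<tau> n *\<^sub>R u n)"
    and "Pc = (\<Sum>n\<in>{1..N}. \<tau> n *\<^sub>R p n)"
    and "\<And>k. xlow $ k = - min 0 (Min ((\<lambda>n. \<Sum>m\<in>{1..n}. xd m $ k * \<tau> m) ` {1..N}))"
    and "\<And>j. qlow $ j = - min 0 (Min ((\<lambda>n. \<Sum>m\<in>{n..N}. qd m $ j * \<tau> m) ` {1..N}))"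
  shows "bnd_primal_optimal A \<beta> b \<gamma> c T xlow Uc u0b uNb \<and>
         bnd_dual_optimal A \<beta> b \<gamma> c T qlow Pc pNb p0b"
proof -
  have "bnd_primal_optimal A \<beta> b \<gamma> c T xlow (\<Sum>n\<in>{1..N}. \<tau> n *\<^sub>R u n) u0b uNb"
    using assms(3-5,8) by (rule boundary_primal_optimal)
  moreover have "bnd_dual_optimal A \<beta> b \<gamma> c T qlow (\<Sum>n\<in>{1..N}. \<tau> n *\<^sub>R p n) pNb p0b"
    using assms(3-5,9) by (rule boundary_dual_optimal)
  ultimately show ?thesis unfolding assms(6,7) by blast
qed

end
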